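(* Let $B$ be a finite set of spins and let $w_{i,j}=w_{j,i}\ge 0$ (for distinct $i,j\in B$) be interaction strengths. For a cluster $\mathcal S\subseteq B$ with $|\mathcal S|\ge 2$, define its heuristic strength $s(\mathcal S)$ as the largest value $s\in\{w_{i,j}: i,j\in\mathcal S, i\ne j\}$ such that the graph on vertex set $\mathcal S$ with edges $\{\{i,j\}: i,j\in\mathcal S,\ w_{i,j}\ge s\}$ is connected (equivalently, the smallest interaction necessary to complete the connectivity of $\mathcal S$ when interactions among its spins are added in order of decreasing strength); for $|\mathcal S|=1$ set $s(\mathcal S)=+\infty$. Then for any cluster $\mathcal S$ with $|\mathcal S|\ge 2$ and any spin $i\in\mathcal S$, there exists a sub-cluster $\mathcal C\subseteq\mathcal S$ with $i\in\mathcal C$, $|\mathcal C|=|\mathcal S|-1$, and $s(\mathcal C)\ge s(\mathcal S)$.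
   Context: Clusters are arbitrary subsets of spins; "sub-cluster" means subset. *)

theory Defs
  imports Complex_Main "HOL-Library.Extended_Real"
begin

definition thr_edges :: "('a \<Rightarrow> 'a \<Rightarrow> real) \<Rightarrow> 'a set \<Rightarrow> real \<Rightarrow> ('a \<times> 'a) set" where
  "thr_edges w S s = {(i, j). i \<in> S \<and> j \<in> S \<and> i \<noteq> j \<and> w i j \<ge> s}"

definition thr_connected :: "('a \<Rightarrow> 'a \<Rightarrow> real) \<Rightarrow> 'a set \<Rightarrow> real \<Rightarrow> bool" where
  "thr_connected w S s \<longleftrightarrow> (\<forall>x\<in>S. \<forall>y\<in>S. (x, y) \<in> (thr_edges w S s)\<^sup>*)"

definition inner_weights :: "('a \<Rightarrow> 'a \<Rightarrow> real) \<Rightarrow> 'a set \<Rightarrow> real set" where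
  "inner_weights w S = {w i j | i j. i \<in> S \<and> j \<in> S \<and> i \<noteq> j}"

definition strength :: "('a \<Rightarrow> 'a \<Rightarrow> real) \<Rightarrow> 'a set \<Rightarrow> ereal" where
  "strength w S = (if card S = 1 then \<infinity>
     else ereal (Max {s \<in> inner_weights w S. thr_connected w S s}))"

end

theory Submission
  imports Defs
begin

text \<open>Pick the spin j of S farthest from i in the threshold graph at level s(S). Every other
  spin is joined to i by a shortest path, and all vertices on such a path except its end are
  strictly closer to i than j, so the path avoids j. Since the interactions are symmetric,
  reachability from i means connectivity, so S - {j} is still connected at level s(S), which
  gives s(S - {j}) \<ge> s(S).\<close>

definition hop_dist :: "'a rel \<Rightarrow> 'a \<Rightarrow> 'a \<Rightarrow> nat" where
  "hop_dist R i v = (LEAST n. (i, v) \<in> R ^^ n)"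

lemma relpow_hop_dist: "(i, v) \<in> R\<^sup>* \<Longrightarrow> (i, v) \<in> R ^^ hop_dist R i v"
  unfolding hop_dist_def by (rule LeastI_ex) (simp add: rtrancl_power)

lemma hop_dist_le: "(i, v) \<in> R ^^ n \<Longrightarrow> hop_dist R i v \<le> n"
  unfolding hop_dist_def by (rule Least_le)

lemma hop_dist_self [simp]: "hop_dist R i i = 0"
  using hop_dist_le[where n = 0] by fastforce

lemma shortest_path_through_closer:
  assumes "(i, v) \<in> R\<^sup>*"
  shows "(i, v) \<in> (Restr R {u. u = v \<or> hop_dist R i u < hop_dist R i v})\<^sup>*"
  using assms
proof (induction "hop_dist R i v" arbitrary: v)
  case 0
  then have "(i, v) \<in> R ^^ 0" using relpow_hop_dist by metis
  then show ?case by simp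
next
  case (Suc m v)
  then obtain u where iu: "(i, u) \<in> R ^^ m" and uv: "(u, v) \<in> R"
    by (metis relpow_hop_dist relpow_Suc_E)
  have "hop_dist R i v \<le> Suc (hop_dist R i u)"
    by (rule hop_dist_le, rule relpow_Suc_I[OF relpow_hop_dist uv]) (use iu relpow_imp_rtrancl in blast)
  with hop_dist_le[OF iu] Suc.hyps(2) have du: "hop_dist R i u = m" by simp
  let ?Y = "{x. x = u \<or> hop_dist R i x < hop_dist R i u}"
  let ?X = "{x. x = v \<or> hop_dist R i x < hop_dist R i v}"
  have "(i, u) \<in> (Restr R ?Y)\<^sup>*"
    using Suc.hyps(1)[of u] du iu relpow_imp_rtrancl by blast
  moreover have "Restr R ?Y \<subseteq> Restr R ?X"
    using du Suc.hyps(2) by auto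
  ultimately have "(i, u) \<in> (Restr R ?X)\<^sup>*" using rtrancl_mono by blast
  moreover have "(u, v) \<in> Restr R ?X"
    using uv du Suc.hyps(2) by auto
  ultimately show ?case by (rule rtrancl_into_rtrancl)
qed

lemma exists_vertex_removal_keeps_reachable:
  assumes "finite S" and "i \<in> S" and "S \<noteq> {i}"
    and "R \<subseteq> S \<times> S" and reach: "\<forall>v\<in>S. (i, v) \<in> R\<^sup>*"
  shows "\<exists>j\<in>S. j \<noteq> i \<and> (\<forall>v\<in>S - {j}. (i, v) \<in> (Restr R (S - {j}))\<^sup>*)"
proof -
  have "Max (hop_dist R i ` S) \<in> hop_dist R i ` S"
    using \<open>finite S\<close> \<open>i \<in> S\<close> by (intro Max_in) auto
  then obtain j where jS: "j \<in> S" and j_max: "hop_dist R i j = Max (hop_dist R i ` S)" by auto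
  have farthest: "hop_dist R i v \<le> hop_dist R i j" if "v \<in> S" for v
    unfolding j_max using \<open>finite S\<close> that by simp
  have "j \<noteq> i"
  proof
    assume "j = i"
    obtain v where "v \<in> S" "v \<noteq> i" using \<open>i \<in> S\<close> \<open>S \<noteq> {i}\<close> by blast
    with farthest[of v] \<open>j = i\<close> have "(i, v) \<in> R ^^ 0"
      using relpow_hop_dist reach by (metis hop_dist_self le_zero_eq)
    with \<open>v \<noteq> i\<close> show False by simp
  qed
  moreover have "(i, v) \<in> (Restr R (S - {j}))\<^sup>*" if "v \<in> S - {j}" for v
  proof -
    let ?X = "{u. u = v \<or> hop_dist R i u < hop_dist R i v}"
    have "(i, v) \<in> (Restr R ?X)\<^sup>*"
      using reach that by (intro shortest_path_through_closer) blast
    moreover have "j \<notin> ?X" using farthest that by (auto simp: not_less)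
    then have "Restr R ?X \<subseteq> Restr R (S - {j})" using \<open>R \<subseteq> S \<times> S\<close> by blast
    ultimately show ?thesis using rtrancl_mono by blast
  qed
  ultimately show ?thesis using jS by blast
qed

lemma finite_inner_weights:
  assumes "finite S"
  shows "finite (inner_weights w S)"
proof -
  have "inner_weights w S \<subseteq> (\<lambda>(i, j). w i j) ` (S \<times> S)"
    unfolding inner_weights_def by auto
  then show ?thesis using assms finite_subset by blast
qed

lemma thr_edges_Restr: "C \<subseteq> S \<Longrightarrow> Restr (thr_edges w S s) C = thr_edges w C s"
  unfolding thr_edges_def by auto

lemma thr_connected_if_all_ge:
  "\<forall>x\<in>S. \<forall>y\<in>S. x \<noteq> y \<longrightarrow> s \<le> w x y \<Longrightarrow> thr_connected w S s"
  unfolding thr_connected_def thr_edges_def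
  by (metis (mono_tags, lifting) case_prodI mem_Collect_eq r_into_rtrancl rtrancl.rtrancl_refl)

lemma thr_connected_if_reachable:
  assumes "\<forall>x\<in>S. \<forall>y\<in>S. x \<noteq> y \<longrightarrow> w x y = w y x"
    and "i \<in> S" and reach: "\<forall>v\<in>S. (i, v) \<in> (thr_edges w S s)\<^sup>*"
  shows "thr_connected w S s"
proof -
  have "sym (thr_edges w S s)"
    using assms(1) unfolding thr_edges_def sym_def by auto
  then have "sym ((thr_edges w S s)\<^sup>*)" by (rule sym_rtrancl)
  then show ?thesis
    unfolding thr_connected_def using reach by (meson rtrancl_trans symD)
qed

lemma strength_attained:
  assumes "finite S" and "card S \<ge> 2"
  obtains s where "strength w S = ereal s" and "thr_connected w S s"
proof -
  let ?M = "{s \<in> inner_weights w S. thr_connected w S s}"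
  obtain x y where "x \<in> S" "y \<in> S" "x \<noteq> y"
    using assms card_le_Suc0_iff_eq[OF \<open>finite S\<close>] by (metis not_less_eq_eq numeral_2_eq_2)
  then have "inner_weights w S \<noteq> {}" unfolding inner_weights_def by blast
  moreover have "thr_connected w S (Min (inner_weights w S))"
  proof (rule thr_connected_if_all_ge, intro ballI impI)
    fix a b assume "a \<in> S" "b \<in> S" "a \<noteq> b"
    then have "w a b \<in> inner_weights w S" unfolding inner_weights_def by blast
    then show "Min (inner_weights w S) \<le> w a b"
      using finite_inner_weights[OF \<open>finite S\<close>] by simp
  qed
  ultimately have "Min (inner_weights w S) \<in> ?M"
    using finite_inner_weights[OF \<open>finite S\<close>] by simp
  then have "Max ?M \<in> ?M"
    using finite_inner_weights[OF \<open>finite S\<close>] by (intro Max_in) auto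
  moreover have "strength w S = ereal (Max ?M)"
    using \<open>card S \<ge> 2\<close> unfolding strength_def by simp
  ultimately show thesis using that by blast
qed

lemma strength_ge_if_thr_connected:
  assumes "finite C" and "C \<noteq> {}" and conn: "thr_connected w C s"
  shows "ereal s \<le> strength w C"
proof (cases "card C = 1")
  case True
  then show ?thesis by (simp add: strength_def)
next
  case False
  let ?T = "{t \<in> inner_weights w C. s \<le> t}"
  have fin_T: "finite ?T" using finite_inner_weights[OF \<open>finite C\<close>] by simp
  obtain x y where xy: "x \<in> C" "y \<in> C" "x \<noteq> y"
  proof -
    have "card C > 0" using \<open>finite C\<close> \<open>C \<noteq> {}\<close> by (simp add: card_gt_0_iff)
    with False have "\<not> card C \<le> Suc 0" by linarith
    then show thesis using that card_le_Suc0_iff_eq[OF \<open>finite C\<close>] by blast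
  qed
  then have "(x, y) \<in> (thr_edges w C s)\<^sup>*" using conn unfolding thr_connected_def by blast
  then obtain z where "(x, z) \<in> thr_edges w C s" using \<open>x \<noteq> y\<close> by (metis converse_rtranclE)
  then have "w x z \<in> ?T" unfolding thr_edges_def inner_weights_def by blast
  then have t_T: "Min ?T \<in> ?T" using fin_T by (intro Min_in) auto
  \<comment> \<open>raising the threshold to the least interaction value above s removes no edge\<close>
  have "thr_edges w C (Min ?T) = thr_edges w C s"
  proof
    show "thr_edges w C (Min ?T) \<subseteq> thr_edges w C s"
      using t_T unfolding thr_edges_def by auto
    have "Min ?T \<le> w a b" if "(a, b) \<in> thr_edges w C s" for a b
      using that fin_T unfolding thr_edges_def inner_weights_def by (intro Min_le) auto
    then show "thr_edges w C s \<subseteq> thr_edges w C (Min ?T)"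
      unfolding thr_edges_def by auto
  qed
  then have "Min ?T \<in> {t \<in> inner_weights w C. thr_connected w C t}"
    using t_T conn unfolding thr_connected_def by simp
  then have "Min ?T \<le> Max {t \<in> inner_weights w C. thr_connected w C t}"
    using finite_inner_weights[OF \<open>finite C\<close>] by (intro Max_ge) auto
  with t_T False show ?thesis unfolding strength_def by simp
qed

theorem theorem2:
  fixes B :: "'a set" and w :: "'a \<Rightarrow> 'a \<Rightarrow> real" and S :: "'a set" and i :: 'a
  assumes "finite B"
    and "\<forall>x\<in>B. \<forall>y\<in>B. x \<noteq> y \<longrightarrow> w x y = w y x \<and> w x y \<ge> 0"
    and "S \<subseteq> B" and "card S \<ge> 2" and "i \<in> S"
  shows "\<exists>C. C \<subseteq> S \<and> i \<in> C \<and> card C = card S - 1 \<and> strength w C \<ge> strength w S"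
proof -
  have "finite S" using assms(1,3) finite_subset by blast
  obtain s where strength_S: "strength w S = ereal s" and "thr_connected w S s"
    using strength_attained[OF \<open>finite S\<close> \<open>card S \<ge> 2\<close>] .
  then have reach: "\<forall>v\<in>S. (i, v) \<in> (thr_edges w S s)\<^sup>*"
    using \<open>i \<in> S\<close> unfolding thr_connected_def by blast
  have "S \<noteq> {i}" using \<open>card S \<ge> 2\<close> by auto
  then obtain j where "j \<in> S" "j \<noteq> i"
    and reach_C: "\<forall>v\<in>S - {j}. (i, v) \<in> (Restr (thr_edges w S s) (S - {j}))\<^sup>*"
    using exists_vertex_removal_keeps_reachable[OF \<open>finite S\<close> \<open>i \<in> S\<close> _ _ reach]
    by (auto simp: thr_edges_def)
  let ?C = "S - {j}"
  have "thr_connected w ?C s"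
    using assms(2,3) \<open>i \<in> S\<close> \<open>j \<noteq> i\<close> reach_C
    by (intro thr_connected_if_reachable) (auto simp: thr_edges_Restr)
  then have "strength w ?C \<ge> strength w S"
    unfolding strength_S using \<open>finite S\<close> \<open>i \<in> S\<close> \<open>j \<noteq> i\<close>
    by (intro strength_ge_if_thr_connected) auto
  moreover have "card ?C = card S - 1" using \<open>finite S\<close> \<open>j \<in> S\<close> by simp
  moreover have "?C \<subseteq> S" and "i \<in> ?C" using \<open>i \<in> S\<close> \<open>j \<noteq> i\<close> by auto
  ultimately show ?thesis by blast
qed

end
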